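(* Let $\mathbb{F}$ be a field, let $A=(a_{ij})\in M_n(\mathbb{F})$, and let $S_A\colon M_n(\mathbb{F})\to M_n(\mathbb{F})$ be the Schur map $S_A(B)=A\circ B$. Then the following are equivalent: (i) $S_A$ is a nonzero homomorphism (with respect to matrix multiplication); (ii) there is an invertible diagonal matrix $\Lambda\in M_n(\mathbb{F})$ such that $S_A(X)=\Lambda X\Lambda^{-1}$ for all $X\in M_n(\mathbb{F})$; (iii) $a_{ij}=a_{ik}a_{kj}$ and $a_{ii}=1$ for all $1\le i,j,k\le n$.
   Context: $A\circ B=(a_{ij}b_{ij})$ denotes the entrywise (Schur) product of matrices over $\mathbb{F}$. *)

theory Defs
  imports "HOL-Analysis.Analysis"
begin

definition schur_prod :: "'a::field ^'n^'n \<Rightarrow> 'a^'n^'n \<Rightarrow> 'a^'n^'n" where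
  "schur_prod A B = (\<chi> i j. A $ i $ j * B $ i $ j)"

definition diagonal_mat :: "'a::zero ^'n^'n \<Rightarrow> bool" where
  "diagonal_mat L \<longleftrightarrow> (\<forall>i j. i \<noteq> j \<longrightarrow> L $ i $ j = 0)"

end

theory Submission
  imports Defs
begin

text \<open>
  Applying \<open>S_A\<close> to matrix units, \<open>E_ik E_kj = E_ij\<close> shows that a multiplicative Schur
  map satisfies \<open>a_ij = a_ik a_kj\<close>; then every \<open>a_ii\<close> is idempotent, and a single vanishing
  diagonal entry would force \<open>A = 0\<close>. Conversely, fixing one index \<open>k\<close>, the rule factors
  \<open>a_ij = a_ik a_kj\<close>, so \<open>A \<circ> X = diag(a_ik) X diag(a_kj)\<close>, and the two diagonal factors are
  mutually inverse since \<open>a_ik a_ki = a_ii = 1\<close>. Finally, conjugation by an invertible matrix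
  is multiplicative and fixes the identity.
\<close>

definition matrix_unit :: "'n \<Rightarrow> 'n \<Rightarrow> 'a::semiring_1^'n^'n" where
  "matrix_unit p q = (\<chi> i j. if i = p \<and> j = q then 1 else 0)"

definition diag_mat :: "('n \<Rightarrow> 'a::semiring_1) \<Rightarrow> 'a^'n^'n" where
  "diag_mat d = (\<chi> i j. if i = j then d i else 0)"

lemma matrix_unit_mult: "matrix_unit i k ** matrix_unit k j = matrix_unit i j"
  by (simp add: matrix_unit_def matrix_matrix_mult_def vec_eq_iff
      if_distrib[where f="\<lambda>x. x * _"] sum.delta cong: if_cong)

lemma schur_prod_matrix_unit:
  "schur_prod A (matrix_unit p q) = (\<chi> i j. if i = p \<and> j = q then A $ p $ q else 0)"
  by (simp add: schur_prod_def matrix_unit_def vec_eq_iff)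

lemma diag_mat_mult_left: "diag_mat d ** X = (\<chi> i j. d i * X $ i $ j)"
  by (simp add: diag_mat_def matrix_matrix_mult_def vec_eq_iff
      if_distrib[where f="\<lambda>x. x * _"] sum.delta cong: if_cong)

lemma diag_mat_mult_right: "X ** diag_mat d = (\<chi> i j. X $ i $ j * d j)"
  by (simp add: diag_mat_def matrix_matrix_mult_def vec_eq_iff
      if_distrib[where f="\<lambda>x. _ * x"] sum.delta cong: if_cong)

lemma diag_mat_mult: "diag_mat d ** diag_mat e = diag_mat (\<lambda>i. d i * e i)"
  unfolding diag_mat_mult_left by (simp add: diag_mat_def vec_eq_iff)

lemma diag_mat_one: "diag_mat (\<lambda>_. 1) = mat 1"
  by (simp add: diag_mat_def mat_def)

lemma diagonal_mat_diag_mat: "diagonal_mat (diag_mat d)"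
  by (simp add: diagonal_mat_def diag_mat_def)

lemma schur_prod_outer:
  fixes d e :: "'n::finite \<Rightarrow> 'a::field"
  shows "schur_prod (\<chi> i j. d i * e j) X = diag_mat d ** X ** diag_mat e"
  by (simp add: schur_prod_def diag_mat_mult_left diag_mat_mult_right vec_eq_iff ac_simps)

lemma matrix_inv_works:
  assumes "invertible L"
  shows "L ** matrix_inv L = mat 1" and "matrix_inv L ** L = mat 1"
  using someI_ex[OF assms[unfolded invertible_def]] by (simp_all add: matrix_inv_def)

lemma matrix_inv_unique:
  fixes L M :: "'a::semiring_1^'n^'n"
  assumes "L ** M = mat 1" and "M ** L = mat 1"
  shows "matrix_inv L = M"
proof -
  have inv: "invertible L" using assms invertible_def by blast
  have "matrix_inv L = matrix_inv L ** (L ** M)" by (simp add: assms(1))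
  also have "\<dots> = M" by (simp add: matrix_mul_assoc matrix_inv_works(2)[OF inv])
  finally show ?thesis .
qed

lemma conjugation_mult:
  fixes L :: "'a::semiring_1^'n^'n"
  assumes "invertible L"
  shows "(L ** X ** matrix_inv L) ** (L ** Y ** matrix_inv L) = L ** (X ** Y) ** matrix_inv L"
proof -
  have "(L ** X ** matrix_inv L) ** (L ** Y ** matrix_inv L)
      = L ** X ** ((matrix_inv L ** L) ** (Y ** matrix_inv L))"
    by (simp only: matrix_mul_assoc)
  then show ?thesis by (simp add: matrix_inv_works(2)[OF assms] matrix_mul_assoc)
qed

lemma conjugation_mat_1:
  fixes L :: "'a::semiring_1^'n^'n"
  assumes "invertible L"
  shows "L ** mat 1 ** matrix_inv L = mat 1"
  by (simp add: matrix_inv_works(1)[OF assms])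

lemma mat_1_nonzero: "(mat 1 :: 'a::zero_neq_one^'n^'n) \<noteq> 0"
proof
  assume "(mat 1 :: 'a^'n^'n) = 0"
  then have "(mat 1 :: 'a^'n^'n) $ undefined $ undefined = 0" by simp
  then show False by (simp add: mat_def)
qed

lemma schur_hom_entries_mult:
  assumes "\<forall>X Y. schur_prod A (X ** Y) = schur_prod A X ** schur_prod A Y"
  shows "A $ i $ j = A $ i $ k * A $ k $ j"
proof -
  have "schur_prod A (matrix_unit i j)
      = schur_prod A (matrix_unit i k) ** schur_prod A (matrix_unit k j)"
    using assms matrix_unit_mult by metis
  then have "schur_prod A (matrix_unit i j) $ i $ j
      = (schur_prod A (matrix_unit i k) ** schur_prod A (matrix_unit k j)) $ i $ j"
    by simp
  then show ?thesis
    by (simp add: schur_prod_matrix_unit matrix_matrix_mult_def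
        if_distrib[where f="\<lambda>x. x * _"] sum.delta cong: if_cong)
qed

lemma entries_mult_diag_one:
  fixes A :: "'a::field^'n^'n"
  assumes mult: "\<And>i j k. A $ i $ j = A $ i $ k * A $ k $ j" and "A \<noteq> 0"
  shows "A $ i $ i = 1"
proof (rule ccontr)
  assume "A $ i $ i \<noteq> 1"
  moreover have "A $ i $ i = A $ i $ i * A $ i $ i" by (rule mult)
  ultimately have zero: "A $ i $ i = 0" by (metis mult_cancel_right1 mult_zero_left)
  have "A $ j $ k = 0" for j k
    using mult[of j k i] mult[of j i i] zero by simp
  then have "A = 0" by (simp add: vec_eq_iff)
  with \<open>A \<noteq> 0\<close> show False by contradiction
qed

lemma schur_hom_imp_entries:
  fixes A :: "'a::field^'n^'n"
  assumes hom: "\<forall>X Y. schur_prod A (X ** Y) = schur_prod A X ** schur_prod A Y"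
    and nonzero: "\<exists>X. schur_prod A X \<noteq> 0"
  shows "\<forall>i j k. A $ i $ j = A $ i $ k * A $ k $ j \<and> A $ i $ i = 1"
proof -
  have "A \<noteq> 0" using nonzero by (auto simp: schur_prod_def vec_eq_iff)
  then show ?thesis
    using schur_hom_entries_mult[OF hom] entries_mult_diag_one by blast
qed

lemma entries_imp_schur_diag_conjugation:
  fixes A :: "'a::field^'n^'n"
  assumes "\<forall>i j k. A $ i $ j = A $ i $ k * A $ k $ j \<and> A $ i $ i = 1"
  shows "\<exists>L::'a^'n^'n. diagonal_mat L \<and> invertible L \<and>
           (\<forall>X. schur_prod A X = L ** X ** matrix_inv L)"
proof -
  fix k
  define L :: "'a^'n^'n" where "L = diag_mat (\<lambda>i. A $ i $ k)"
  define M :: "'a^'n^'n" where "M = diag_mat (\<lambda>j. A $ k $ j)"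
  have "A $ i $ k * A $ k $ i = 1" for i using assms by metis
  then have "L ** M = mat 1" and "M ** L = mat 1"
    by (simp_all add: L_def M_def diag_mat_mult mult.commute diag_mat_one)
  then have "invertible L" and "matrix_inv L = M"
    by (auto simp: invertible_def intro: matrix_inv_unique)
  moreover have "A = (\<chi> i j. A $ i $ k * A $ k $ j)"
    using assms by (simp add: vec_eq_iff)
  then have "schur_prod A X = L ** X ** M" for X
    by (metis L_def M_def schur_prod_outer)
  ultimately show ?thesis
    using diagonal_mat_diag_mat L_def by metis
qed

lemma schur_conjugation_imp_hom:
  fixes A L :: "'a::field^'n^'n"
  assumes "invertible L" and conj: "\<forall>X. schur_prod A X = L ** X ** matrix_inv L"
  shows "(\<forall>X Y. schur_prod A (X ** Y) = schur_prod A X ** schur_prod A Y)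
           \<and> (\<exists>X. schur_prod A X \<noteq> 0)"
  using conj conjugation_mult[OF assms(1)] conjugation_mat_1[OF assms(1)] mat_1_nonzero
  by metis

theorem proposition3p1:
  fixes A :: "'a::field ^'n^'n"
  shows "(((\<forall>X Y. schur_prod A (X ** Y) = schur_prod A X ** schur_prod A Y)
            \<and> (\<exists>X. schur_prod A X \<noteq> 0))
          \<longleftrightarrow> (\<exists>L::'a^'n^'n. diagonal_mat L \<and> invertible L \<and>
                 (\<forall>X. schur_prod A X = L ** X ** matrix_inv L)))
       \<and> ((\<exists>L::'a^'n^'n. diagonal_mat L \<and> invertible L \<and>
                 (\<forall>X. schur_prod A X = L ** X ** matrix_inv L))
          \<longleftrightarrow> (\<forall>i j k. A $ i $ j = A $ i $ k * A $ k $ j \<and> A $ i $ i = 1))"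
  using schur_hom_imp_entries[of A] entries_imp_schur_diag_conjugation[of A]
    schur_conjugation_imp_hom[of _ A]
  by blast

end
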